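(* Let $\lambda>0$ and $f_1,f_2\in\Omega_\lambda$. If $\lambda\le1$, then the Hadamard product $f_1*f_2\in\Omega_\lambda$.
   Context: $\Omega_\lambda$ denotes the set of functions $f$ analytic in $\mathbb{D}=\{z:|z|<1\}$ with $f(0)=0$, $f'(0)=1$, such that $zf'(z)-f(z)=\lambda z^2\phi(z)$ for some analytic $\phi$ on $\mathbb{D}$ with $|\phi(z)|\le1$. The Hadamard product of $\sum a_kz^k$ and $\sum b_kz^k$ is $\sum a_kb_kz^k$. *)

theory Defs
  imports "HOL-Complex_Analysis.Complex_Analysis"
begin

definition taylor_coeff :: "(complex \<Rightarrow> complex) \<Rightarrow> nat \<Rightarrow> complex" where
  "taylor_coeff f k = (deriv ^^ k) f 0 / of_nat (fact k)"

definition hadamard :: "(complex \<Rightarrow> complex) \<Rightarrow> (complex \<Rightarrow> complex) \<Rightarrow> complex \<Rightarrow> complex" where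
  "hadamard f g z = (\<Sum>k. taylor_coeff f k * taylor_coeff g k * z ^ k)"

definition Omega :: "real \<Rightarrow> (complex \<Rightarrow> complex) set" where
  "Omega lam = {f. f holomorphic_on ball 0 1 \<and> f 0 = 0 \<and> deriv f 0 = 1 \<and>
     (\<exists>\<phi>. \<phi> holomorphic_on ball 0 1 \<and> (\<forall>z\<in>ball 0 1. norm (\<phi> z) \<le> 1) \<and>
        (\<forall>z\<in>ball 0 1. z * deriv f z - f z = complex_of_real lam * z ^ 2 * \<phi> z))}"

end

theory Submission imports Defs begin

(* For f in Omega_lam with Taylor coefficients a_k and associated function phi = sum c_j z^j,
   comparing coefficients in z f' - f = lam z^2 phi gives (k - 1) a_k = lam c_(k-2), and
   sum |c_j|^2 <= 1 by Bessel's inequality for the bounded function phi.  For the Hadamard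
   product h = sum a_k b_k z^k this yields (k - 1) a_k b_k = lam psi_(k-2) with
   psi_j = lam c_j d_j / (j + 1), so z h' - h = lam z^2 psi, and for |z| < 1
     |psi(z)| <= lam sum |c_j| |d_j| <= lam (sum |c_j|^2 + sum |d_j|^2) / 2 <= lam <= 1. *)

lemma fps_expansion_0_nth [simp]: "fps_expansion f 0 $ n = taylor_coeff f n"
  by (simp add: fps_expansion_def taylor_coeff_def)

lemma taylor_coeff_polynomial:
  "taylor_coeff (\<lambda>u. \<Sum>j<N. c j * u ^ j) k = (if k < N then c k else 0)"
proof -
  have "(\<lambda>u. \<Sum>j<N. c j * u ^ j) has_fps_expansion (\<Sum>j<N. fps_const (c j) * fps_X ^ j)"
    by (intro has_fps_expansion_sum has_fps_expansion_cmult_left has_fps_expansion_fps_X_power)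
  from fps_nth_fps_expansion[OF this, of k] show ?thesis
    by (simp add: taylor_coeff_def fps_sum_nth mult.commute[of "c _"] if_distrib[of "\<lambda>x. x * _"] sum.delta
        cong: if_cong)
qed

lemma taylor_coeff_circlepath_integral:
  fixes g :: "complex \<Rightarrow> complex"
  assumes hol: "g holomorphic_on ball 0 1" and r: "0 < r" "r < 1"
  shows "((\<lambda>s. g (circlepath 0 r s) * cnj (circlepath 0 r s) ^ k) has_integral
           (of_real r ^ (2*k) * taylor_coeff g k)) {0..1}"
  \<comment> \<open>Cauchy's formula for the k-th derivative, using cnj z = r^2 / z on the circle.\<close>
proof -
  define c :: complex where "c = 2 * pi * \<i>"
  have "c \<noteq> 0" by (simp add: c_def)
  have sub: "cball 0 r \<subseteq> ball (0::complex) 1" using r by auto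
  have "((\<lambda>u. g u / (u - 0) ^ Suc k) has_contour_integral c / fact k * (deriv ^^ k) g 0)
          (circlepath 0 r)"
    unfolding c_def using r hol sub
    by (intro Cauchy_has_contour_integral_higher_derivative_circlepath)
       (auto intro: holomorphic_on_imp_continuous_on holomorphic_on_subset continuous_on_subset)
  then have "((\<lambda>s. g (circlepath 0 r s) / circlepath 0 r s ^ Suc k *
                   vector_derivative (circlepath 0 r) (at s within {0..1})) has_integral
              c * taylor_coeff g k) {0..1}"
    by (simp add: has_contour_integral_def taylor_coeff_def)
  from has_integral_mult_right[OF this, of "of_real r ^ (2*k) / c"] \<open>c \<noteq> 0\<close>
  have "((\<lambda>s. of_real r ^ (2*k) / c * (g (circlepath 0 r s) / circlepath 0 r s ^ Suc k *
           vector_derivative (circlepath 0 r) (at s within {0..1}))) has_integral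
        of_real r ^ (2*k) * taylor_coeff g k) {0..1}"
    by simp
  moreover have "of_real r ^ (2*k) / c * (g (circlepath 0 r s) / circlepath 0 r s ^ Suc k *
           vector_derivative (circlepath 0 r) (at s within {0..1}))
      = g (circlepath 0 r s) * cnj (circlepath 0 r s) ^ k" if s: "s \<in> {0..1}" for s
  proof -
    define e where "e = exp (2 * of_real pi * \<i> * s)"
    have "e \<noteq> 0" "norm e = 1" by (simp_all add: e_def norm_exp_eq_Re)
    then have cnj_e: "cnj e = 1 / e"
      using complex_norm_square[of e] by (simp add: field_simps)
    have "circlepath 0 r s = of_real r * e"
      by (simp add: circlepath_def part_circlepath_def linepath_def e_def algebra_simps)
    moreover have "vector_derivative (circlepath 0 r) (at s within {0..1}) = 2 * pi * \<i> * r * e"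
      using s vector_derivative_circlepath01 e_def by auto
    ultimately show ?thesis using r \<open>e \<noteq> 0\<close>
      by (simp add: c_def cnj_e field_simps power_mult_distrib power2_eq_square power_mult)
  qed
  ultimately show ?thesis
    by (subst (asm) has_integral_cong) auto
qed

lemma circlepath_integral_cnj_polynomial_mult:
  fixes g :: "complex \<Rightarrow> complex"
  assumes "g holomorphic_on ball 0 1" "0 < r" "r < 1"
  shows "((\<lambda>s. cnj (\<Sum>j<N. c j * circlepath 0 r s ^ j) * g (circlepath 0 r s)) has_integral
           (\<Sum>j<N. cnj (c j) * of_real r ^ (2*j) * taylor_coeff g j)) {0..1}"
proof -
  have "((\<lambda>s. \<Sum>j<N. cnj (c j) * (g (circlepath 0 r s) * cnj (circlepath 0 r s) ^ j)) has_integral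
           (\<Sum>j<N. cnj (c j) * (of_real r ^ (2*j) * taylor_coeff g j))) {0..1}"
    by (intro has_integral_sum finite_lessThan has_integral_mult_right
          taylor_coeff_circlepath_integral assms)
  then show ?thesis
    by (simp add: sum_distrib_left mult_ac)
qed

lemma bessel_inequality_circlepath:
  fixes \<phi> :: "complex \<Rightarrow> complex"
  assumes hol: "\<phi> holomorphic_on ball 0 1" and bound: "\<And>z. z \<in> ball 0 1 \<Longrightarrow> norm (\<phi> z) \<le> M"
    and r: "0 < r" "r < 1"
  shows "(\<Sum>j<N. norm (taylor_coeff \<phi> j) ^ 2 * r ^ (2*j)) \<le> M\<^sup>2"
  \<comment> \<open>For the Taylor polynomial p of degree < N, both cnj p * \<phi> and |p|^2 integrate to
    the left-hand side S over the circle of radius r, and Re (cnj p * \<phi>) \<le> |p| M \<le>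
    (|p|^2 + M^2) / 2, whence S \<le> (S + M^2) / 2.\<close>
proof -
  define c where "c = taylor_coeff \<phi>"
  define p where "p = (\<lambda>u. \<Sum>j<N. c j * u ^ j)"
  define \<gamma> where "\<gamma> = circlepath 0 r"
  define S where "S = (\<Sum>j<N. norm (c j) ^ 2 * r ^ (2*j))"
  have S_eq: "(\<Sum>j<N. cnj (c j) * of_real r ^ (2*j) * c' j) = of_real S"
    if "\<And>j. j < N \<Longrightarrow> c' j = c j" for c'
    unfolding S_def of_real_sum
    by (intro sum.cong refl) (simp add: that mult_ac flip: complex_norm_square)
  have "p holomorphic_on ball 0 1"
    unfolding p_def by (intro holomorphic_intros)
  from circlepath_integral_cnj_polynomial_mult[OF this r, where N = N and c = c]
  have "((\<lambda>s. cnj (p (\<gamma> s)) * p (\<gamma> s)) has_integral of_real S) {0..1}"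
    using S_eq[of "\<lambda>j. if j < N then c j else 0"] by (simp add: p_def \<gamma>_def taylor_coeff_polynomial)
  from has_integral_Re[OF this] have I_sq: "((\<lambda>s. norm (p (\<gamma> s)) ^ 2) has_integral S) {0..1}"
    by (simp add: mult.commute[of "cnj _"] flip: complex_norm_square)
  from circlepath_integral_cnj_polynomial_mult[OF hol r, where N = N and c = c]
  have "((\<lambda>s. cnj (p (\<gamma> s)) * \<phi> (\<gamma> s)) has_integral of_real S) {0..1}"
    using S_eq[of c] by (simp add: p_def \<gamma>_def c_def)
  from has_integral_Re[OF this]
  have I_re: "((\<lambda>s. Re (cnj (p (\<gamma> s)) * \<phi> (\<gamma> s))) has_integral S) {0..1}"
    by simp
  have "((\<lambda>s. (norm (p (\<gamma> s)) ^ 2 + M\<^sup>2) / 2) has_integral (S + M\<^sup>2) / 2) {0..1}"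
    using has_integral_divide[OF has_integral_add[OF I_sq has_integral_const_real[of "M\<^sup>2" 0 1]], of 2]
    by simp
  then have "S \<le> (S + M\<^sup>2) / 2"
  proof (rule has_integral_le[OF I_re])
    fix s :: real
    assume "s \<in> {0..1}"
    then have "\<gamma> s \<in> sphere 0 r"
      using r path_image_circlepath[of 0 r] by (auto simp: \<gamma>_def path_image_def)
    then have "norm (\<phi> (\<gamma> s)) \<le> M"
      using r by (intro bound) simp
    then have "Re (cnj (p (\<gamma> s)) * \<phi> (\<gamma> s)) \<le> norm (p (\<gamma> s)) * M"
      by (metis complex_Re_le_cmod complex_mod_cnj mult_left_mono norm_ge_zero norm_mult order_trans)
    also have "\<dots> \<le> (norm (p (\<gamma> s)) ^ 2 + M\<^sup>2) / 2"
      using sum_squares_ge_zero[of "norm (p (\<gamma> s)) - M" 0] by (simp add: power2_eq_square algebra_simps)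
    finally show "Re (cnj (p (\<gamma> s)) * \<phi> (\<gamma> s)) \<le> (norm (p (\<gamma> s)) ^ 2 + M\<^sup>2) / 2" .
  qed
  then show ?thesis
    by (simp add: S_def c_def)
qed

lemma bessel_inequality_partial_sum:
  fixes \<phi> :: "complex \<Rightarrow> complex"
  assumes "\<phi> holomorphic_on ball 0 1" "\<And>z. z \<in> ball 0 1 \<Longrightarrow> norm (\<phi> z) \<le> M"
  shows "(\<Sum>j<N. norm (taylor_coeff \<phi> j) ^ 2) \<le> M\<^sup>2"
proof -
  define q where "q r = (\<Sum>j<N. norm (taylor_coeff \<phi> j) ^ 2 * r ^ (2*j))" for r :: real
  have "(q \<longlongrightarrow> q 1) (at_left 1)"
    unfolding q_def by (intro tendsto_intros)
  moreover have "eventually (\<lambda>r. r \<in> {0<..<1}) (at_left (1::real))"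
    by (rule eventually_at_left_real) simp
  then have "eventually (\<lambda>r. q r \<le> M\<^sup>2) (at_left 1)"
    by eventually_elim (use bessel_inequality_circlepath[OF assms] in \<open>simp add: q_def\<close>)
  ultimately have "q 1 \<le> M\<^sup>2"
    by (intro tendsto_upperbound) (auto simp: trivial_limit_at_left_real)
  then show ?thesis
    by (simp add: q_def)
qed

lemma bessel_inequality:
  fixes \<phi> :: "complex \<Rightarrow> complex"
  assumes "\<phi> holomorphic_on ball 0 1" "\<And>z. z \<in> ball 0 1 \<Longrightarrow> norm (\<phi> z) \<le> M"
  shows "summable (\<lambda>j. norm (taylor_coeff \<phi> j) ^ 2)"
    and "(\<Sum>j. norm (taylor_coeff \<phi> j) ^ 2) \<le> M\<^sup>2"
proof -
  show summable: "summable (\<lambda>j. norm (taylor_coeff \<phi> j) ^ 2)"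
    by (rule summableI_nonneg_bounded) (use bessel_inequality_partial_sum[OF assms] in auto)
  show "(\<Sum>j. norm (taylor_coeff \<phi> j) ^ 2) \<le> M\<^sup>2"
    by (rule suminf_le_const[OF summable]) (use bessel_inequality_partial_sum[OF assms] in auto)
qed

lemma summable_norm_le_half_sum_squares:
  fixes a :: "nat \<Rightarrow> 'a::real_normed_vector" and x y :: "nat \<Rightarrow> real"
  assumes bound: "\<And>j. norm (a j) \<le> x j * y j"
    and x: "summable (\<lambda>j. (x j)\<^sup>2)" and y: "summable (\<lambda>j. (y j)\<^sup>2)"
  shows "summable (\<lambda>j. norm (a j))"
    and "(\<Sum>j. norm (a j)) \<le> ((\<Sum>j. (x j)\<^sup>2) + (\<Sum>j. (y j)\<^sup>2)) / 2"
proof -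
  have am_gm: "norm (a j) \<le> ((x j)\<^sup>2 + (y j)\<^sup>2) / 2" for j
    using bound[of j] sum_squares_ge_zero[of "x j - y j" 0] by (simp add: power2_eq_square algebra_simps)
  have summable: "summable (\<lambda>j. ((x j)\<^sup>2 + (y j)\<^sup>2) / 2)"
    by (intro summable_divide summable_add x y)
  show "summable (\<lambda>j. norm (a j))"
    by (rule summable_comparison_test'[OF summable]) (use am_gm in simp)
  then have "(\<Sum>j. norm (a j)) \<le> (\<Sum>j. ((x j)\<^sup>2 + (y j)\<^sup>2) / 2)"
    by (intro suminf_le am_gm summable)
  also have "\<dots> = ((\<Sum>j. (x j)\<^sup>2) + (\<Sum>j. (y j)\<^sup>2)) / 2"
    by (simp add: suminf_divide suminf_add summable_add x y)
  finally show "(\<Sum>j. norm (a j)) \<le> ((\<Sum>j. (x j)\<^sup>2) + (\<Sum>j. (y j)\<^sup>2)) / 2" .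
qed

lemma fps_conv_radius_ge_1_if_bounded:
  fixes F :: "'a::{banach, real_normed_div_algebra} fps"
  assumes "\<And>n. norm (F $ n) \<le> B"
  shows "fps_conv_radius F \<ge> 1"
  unfolding fps_conv_radius_def
proof (rule conv_radius_geI_ex')
  fix r :: real
  assume r: "0 < r" "ereal r < 1"
  show "summable (\<lambda>n. F $ n * of_real r ^ n)"
  proof (rule summable_comparison_test)
    show "\<exists>N. \<forall>n\<ge>N. norm (F $ n * of_real r ^ n) \<le> B * r ^ n"
      using assms r by (auto simp: norm_mult norm_power intro!: mult_right_mono)
    show "summable (\<lambda>n. B * r ^ n)"
      using r by (intro summable_mult summable_geometric) auto
  qed
qed

lemma norm_eval_fps_le_suminf_norm:
  fixes F :: "'a::{banach, real_normed_div_algebra} fps"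
  assumes summable: "summable (\<lambda>n. norm (F $ n))" and "norm z \<le> 1"
  shows "norm (eval_fps F z) \<le> (\<Sum>n. norm (F $ n))"
proof -
  have le: "norm (F $ n * z ^ n) \<le> norm (F $ n)" for n
    using assms(2) by (simp add: norm_mult norm_power mult_left_le power_le_one)
  then have "summable (\<lambda>n. norm (F $ n * z ^ n))"
    by (intro summable_comparison_test'[OF summable]) simp
  then have "norm (eval_fps F z) \<le> (\<Sum>n. norm (F $ n * z ^ n))"
    unfolding eval_fps_def by (rule summable_norm)
  also have "\<dots> \<le> (\<Sum>n. norm (F $ n))"
    by (intro suminf_le le summable \<open>summable (\<lambda>n. norm (F $ n * z ^ n))\<close>)
  finally show ?thesis .
qed

lemma fps_X_mult_deriv_diff_eq_iff:
  fixes H \<Psi> :: "'a::comm_ring_1 fps"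
  shows "fps_X * fps_deriv H - H = fps_const c * fps_X\<^sup>2 * \<Psi> \<longleftrightarrow>
           H $ 0 = 0 \<and> (\<forall>j. of_nat (j+1) * H $ (j+2) = c * \<Psi> $ j)"
proof -
  have lhs: "(fps_X * fps_deriv H - H) $ n = (of_nat n - 1) * H $ n" for n
    by (cases n) (simp_all add: algebra_simps)
  have rhs: "(fps_const c * fps_X\<^sup>2 * \<Psi>) $ n = (if n < 2 then 0 else c * \<Psi> $ (n - 2))" for n
    by (simp add: mult.assoc fps_X_power_mult_nth)
  have split_nat: "(\<forall>n. P n) \<longleftrightarrow> P 0 \<and> P 1 \<and> (\<forall>j. P (j+2))" for P :: "nat \<Rightarrow> bool"
    by (metis One_nat_def add_2_eq_Suc' not0_implies_Suc)
  show ?thesis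
    unfolding fps_eq_iff lhs rhs by (subst split_nat) (simp add: algebra_simps)
qed

lemma eval_fps_X_mult_deriv_diff:
  fixes H \<Psi> :: "'a::{banach, real_normed_field} fps"
  assumes eq: "fps_X * fps_deriv H - H = fps_const c * fps_X\<^sup>2 * \<Psi>"
    and H: "norm z < fps_conv_radius H" and \<Psi>: "norm z < fps_conv_radius \<Psi>"
  shows "z * deriv (eval_fps H) z - eval_fps H z = c * z\<^sup>2 * eval_fps \<Psi> z"
proof -
  have dH: "norm z < fps_conv_radius (fps_deriv H)"
    using H fps_conv_radius_deriv[of H] by order
  have XdH: "norm z < fps_conv_radius (fps_X * fps_deriv H)"
    using dH fps_conv_radius_mult[of fps_X "fps_deriv H"] by (simp add: order.strict_trans2)
  have cX: "norm z < fps_conv_radius (fps_const c * fps_X\<^sup>2)"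
    using fps_conv_radius_mult[of "fps_const c" "fps_X\<^sup>2"] by (simp add: order.strict_trans2)
  have "z * deriv (eval_fps H) z - eval_fps H z = eval_fps (fps_X * fps_deriv H - H) z"
    using H dH XdH by (simp add: eval_fps_deriv eval_fps_diff eval_fps_mult)
  also have "\<dots> = c * z\<^sup>2 * eval_fps \<Psi> z"
    using \<Psi> cX by (simp add: eq eval_fps_mult)
  finally show ?thesis .
qed

lemma fps_expansion_X_mult_deriv_diff:
  fixes f \<phi> :: "complex \<Rightarrow> complex"
  assumes "open A" "0 \<in> A" "f holomorphic_on A" "\<phi> holomorphic_on A"
    and eq: "\<And>z. z \<in> A \<Longrightarrow> z * deriv f z - f z = c * z\<^sup>2 * \<phi> z"
  shows "fps_X * fps_deriv (fps_expansion f 0) - fps_expansion f 0 =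
           fps_const c * fps_X\<^sup>2 * fps_expansion \<phi> 0"
proof (rule fps_expansion_unique_complex)
  have "eventually (\<lambda>z. z \<in> A) (nhds 0)"
    using assms(1,2) by (rule eventually_nhds_in_open)
  then have ev: "eventually (\<lambda>z. z * deriv f z - f z = c * z\<^sup>2 * \<phi> z) (nhds 0)"
    by eventually_elim (rule eq)
  have "(\<lambda>z. z * deriv f z - f z) has_fps_expansion
                   fps_X * fps_deriv (fps_expansion f 0) - fps_expansion f 0"
    using assms(1-3) by (intro fps_expansion_intros has_fps_expansion_fps_expansion)
  then show "(\<lambda>z. c * z\<^sup>2 * \<phi> z) has_fps_expansion
                     fps_X * fps_deriv (fps_expansion f 0) - fps_expansion f 0"
    using has_fps_expansion_cong[OF ev refl] by simp
  show "(\<lambda>z. c * z\<^sup>2 * \<phi> z) has_fps_expansion fps_const c * fps_X\<^sup>2 * fps_expansion \<phi> 0"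
    using assms(1,2,4) by (intro fps_expansion_intros has_fps_expansion_fps_expansion)
qed

lemma Omega_taylor_coeffs:
  assumes "f \<in> Omega lam"
  obtains c where "taylor_coeff f 0 = 0" "taylor_coeff f 1 = 1"
    and "\<And>j. of_nat (j+1) * taylor_coeff f (j+2) = of_real lam * c j"
    and "summable (\<lambda>j. (norm (c j))\<^sup>2)" "(\<Sum>j. (norm (c j))\<^sup>2) \<le> 1"
proof -
  from assms obtain \<phi> where f: "f holomorphic_on ball 0 1" "f 0 = 0" "deriv f 0 = 1"
    and \<phi>: "\<phi> holomorphic_on ball 0 1" "\<And>z. z \<in> ball 0 1 \<Longrightarrow> norm (\<phi> z) \<le> 1"
    and eq: "\<And>z. z \<in> ball 0 1 \<Longrightarrow> z * deriv f z - f z = of_real lam * z\<^sup>2 * \<phi> z"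
    unfolding Omega_def by blast
  have "fps_X * fps_deriv (fps_expansion f 0) - fps_expansion f 0 =
          fps_const (of_real lam) * fps_X\<^sup>2 * fps_expansion \<phi> 0"
    using f(1) \<phi>(1) eq by (intro fps_expansion_X_mult_deriv_diff) auto
  then have "of_nat (j+1) * taylor_coeff f (j+2) = of_real lam * taylor_coeff \<phi> j" for j
    by (simp add: fps_X_mult_deriv_diff_eq_iff)
  moreover have "taylor_coeff f 0 = 0" "taylor_coeff f 1 = 1"
    using f(2,3) by (simp_all add: taylor_coeff_def)
  ultimately show ?thesis
    using that[of "taylor_coeff \<phi>"] bessel_inequality[OF \<phi>] by simp
qed

lemma eval_fps_in_OmegaI:
  fixes H \<Psi> :: "complex fps"
  assumes "lam \<ge> 0" "H $ 0 = 0" "H $ 1 = 1"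
    and rec: "\<And>j. of_nat (j+1) * H $ (j+2) = of_real lam * \<Psi> $ j"
    and summable: "summable (\<lambda>n. norm (\<Psi> $ n))" and sum_le: "(\<Sum>n. norm (\<Psi> $ n)) \<le> 1"
  shows "eval_fps H \<in> Omega lam"
proof -
  have \<Psi>_le: "norm (\<Psi> $ n) \<le> 1" for n
    using sum_le_suminf[OF summable, of "{n}"] sum_le by simp
  have "norm (H $ n) \<le> max 1 lam" for n
  proof (cases "n < 2")
    case True
    then show ?thesis using assms(2,3) by (auto simp: less_2_cases_iff)
  next
    case False
    then obtain j where n: "n = j + 2"
      by (metis add.commute le_add_diff_inverse not_less)
    have "norm (H $ n) \<le> of_nat (j+1) * norm (H $ n)"
      by (simp add: mult_le_cancel_right1)
    also have "\<dots> = lam * norm (\<Psi> $ j)"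
      using rec[of j] \<open>lam \<ge> 0\<close> by (metis n norm_mult norm_of_nat norm_of_real abs_of_nonneg)
    also have "\<dots> \<le> lam"
      using \<Psi>_le[of j] \<open>lam \<ge> 0\<close> by (simp add: mult_left_le)
    finally show ?thesis by simp
  qed
  then have "fps_conv_radius H \<ge> 1"
    by (rule fps_conv_radius_ge_1_if_bounded)
  moreover have "fps_conv_radius \<Psi> \<ge> 1"
    using \<Psi>_le by (rule fps_conv_radius_ge_1_if_bounded)
  moreover have "ereal (norm z) < 1" if "z \<in> ball 0 1" for z
    using that by (simp add: one_ereal_def)
  ultimately have in_radius: "norm z < fps_conv_radius H" "norm z < fps_conv_radius \<Psi>"
    if "z \<in> ball 0 1" for z
    using that by (meson order.strict_trans2)+
  have eq: "fps_X * fps_deriv H - H = fps_const (of_real lam) * fps_X\<^sup>2 * \<Psi>"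
    using assms(2) rec by (simp add: fps_X_mult_deriv_diff_eq_iff)
  have "eval_fps H holomorphic_on ball 0 1" "eval_fps \<Psi> holomorphic_on ball 0 1"
    using in_radius by (auto intro!: holomorphic_on_eval_fps)
  moreover have "deriv (eval_fps H) 0 = 1"
    using in_radius[of 0] assms(3) by (simp flip: eval_fps_deriv add: eval_fps_at_0)
  moreover have "norm (eval_fps \<Psi> z) \<le> 1" if "z \<in> ball 0 1" for z
    using norm_eval_fps_le_suminf_norm[OF summable, of z] that sum_le by simp
  moreover have "z * deriv (eval_fps H) z - eval_fps H z = of_real lam * z\<^sup>2 * eval_fps \<Psi> z"
    if "z \<in> ball 0 1" for z
    using eval_fps_X_mult_deriv_diff[OF eq in_radius[OF that]] .
  ultimately show ?thesis
    using assms(2) unfolding Omega_def by (auto simp: eval_fps_at_0)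
qed

lemma coeffwise_product_in_Omega:
  fixes a b c d :: "nat \<Rightarrow> complex"
  assumes lam: "0 < lam" "lam \<le> 1"
    and a: "a 0 = 0" "a 1 = 1" "\<And>j. of_nat (j+1) * a (j+2) = of_real lam * c j"
    and b: "b 0 = 0" "b 1 = 1" "\<And>j. of_nat (j+1) * b (j+2) = of_real lam * d j"
    and c: "summable (\<lambda>j. (norm (c j))\<^sup>2)" "(\<Sum>j. (norm (c j))\<^sup>2) \<le> 1"
    and d: "summable (\<lambda>j. (norm (d j))\<^sup>2)" "(\<Sum>j. (norm (d j))\<^sup>2) \<le> 1"
  shows "eval_fps (Abs_fps (\<lambda>k. a k * b k)) \<in> Omega lam"
proof -
  define \<Psi> where "\<Psi> = Abs_fps (\<lambda>j. of_real lam * c j * d j / of_nat (j+1))"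
  have rec: "of_nat (j+1) * (a (j+2) * b (j+2)) = of_real lam * \<Psi> $ j" for j
  proof -
    have "of_nat (j+1) * (a (j+2) * b (j+2)) =
            (of_nat (j+1) * a (j+2)) * (of_nat (j+1) * b (j+2)) / of_nat (j+1)"
      by (simp add: field_simps del: of_nat_Suc)
    also have "\<dots> = of_real lam * \<Psi> $ j"
      unfolding a(3) b(3) by (simp add: \<Psi>_def del: of_nat_Suc)
    finally show ?thesis .
  qed
  have bound: "norm (\<Psi> $ j) \<le> norm (c j) * norm (d j)" for j
  proof -
    have "norm (\<Psi> $ j) = lam * (norm (c j) * norm (d j)) / real (j+1)"
      using lam by (simp add: \<Psi>_def norm_mult norm_divide del: of_nat_Suc)
    also have "\<dots> \<le> lam * (norm (c j) * norm (d j))"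
      using lam by (simp add: divide_le_eq mult_le_cancel_left1 mult_less_0_iff)
    also have "\<dots> \<le> norm (c j) * norm (d j)"
      using lam by (intro mult_left_le_one_le) auto
    finally show ?thesis .
  qed
  have summable: "summable (\<lambda>j. norm (\<Psi> $ j))"
    and "(\<Sum>j. norm (\<Psi> $ j)) \<le> ((\<Sum>j. (norm (c j))\<^sup>2) + (\<Sum>j. (norm (d j))\<^sup>2)) / 2"
    by (rule summable_norm_le_half_sum_squares[OF bound c(1) d(1)])+
  with c(2) d(2) have "(\<Sum>j. norm (\<Psi> $ j)) \<le> 1"
    by simp
  with summable show ?thesis
    using lam a b rec by (intro eval_fps_in_OmegaI) simp_all
qed

theorem theorem4p5:
  fixes lam :: real and f1 f2 :: "complex \<Rightarrow> complex"
  assumes "lam > 0" and "lam \<le> 1"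
    and "f1 \<in> Omega lam" and "f2 \<in> Omega lam"
  shows "hadamard f1 f2 \<in> Omega lam"
proof -
  obtain c where a: "taylor_coeff f1 0 = 0" "taylor_coeff f1 1 = 1"
    "\<And>j. of_nat (j+1) * taylor_coeff f1 (j+2) = of_real lam * c j"
    and c: "summable (\<lambda>j. (norm (c j))\<^sup>2)" "(\<Sum>j. (norm (c j))\<^sup>2) \<le> 1"
    using Omega_taylor_coeffs[OF assms(3)] by blast
  obtain d where b: "taylor_coeff f2 0 = 0" "taylor_coeff f2 1 = 1"
    "\<And>j. of_nat (j+1) * taylor_coeff f2 (j+2) = of_real lam * d j"
    and d: "summable (\<lambda>j. (norm (d j))\<^sup>2)" "(\<Sum>j. (norm (d j))\<^sup>2) \<le> 1"
    using Omega_taylor_coeffs[OF assms(4)] by blast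
  have "hadamard f1 f2 = eval_fps (Abs_fps (\<lambda>k. taylor_coeff f1 k * taylor_coeff f2 k))"
    by (simp add: fun_eq_iff hadamard_def eval_fps_def)
  with coeffwise_product_in_Omega[OF assms(1,2) a b c d] show ?thesis
    by simp
qed

end
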